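(* Let $n\geq 3$, $2\leq p<n$, $-\infty<\alpha<\frac{n-p}{p}$, let $b\in\mathbb{R}$ and set $\delta_1=n-p-\alpha p-\frac{n+pb}{p}$, $\delta_2=n-p-\alpha p-\frac{bp}{p-1}$. Let $|x|$ be the Euclidean norm and $\nabla$ the standard gradient on $\mathbb{R}^n$. Then for every $f\in C_0^\infty(\mathbb{R}^n\setminus\{0\})$, $$\int_{\mathbb{R}^n}\frac{|\nabla f(x)|^p}{|x|^{\alpha p}}dx-\left(\frac{n-p-\alpha p}{p}\right)^p\int_{\mathbb{R}^n}\frac{|f(x)|^p}{|x|^{(\alpha+1)p}}dx\geq C_p\frac{\left(\int_{\mathbb{R}^n}|f(x)|^p|x|^{\delta_1}dx\right)^p}{\left(\int_{\mathbb{R}^n}|f(x)|^p|x|^{\delta_2}dx\right)^{p-1}},$$ where $C_p=c_p\left|\frac{n(p-1)-pb}{p^2}\right|^p$ and $c_p=\min_{0<t\leq 1/2}\left((1-t)^p-t^p+pt^{p-1}\right)$. *)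

theory Defs
  imports "HOL-Analysis.Analysis"
begin

definition partial_deriv :: "'n::finite \<Rightarrow> (real^'n \<Rightarrow> real) \<Rightarrow> real^'n \<Rightarrow> real" where
  "partial_deriv i f x = deriv (\<lambda>t. f (x + t *\<^sub>R axis i 1)) 0"

fun iter_partial :: "'n::finite list \<Rightarrow> (real^'n \<Rightarrow> real) \<Rightarrow> real^'n \<Rightarrow> real" where
  "iter_partial [] f = f"
| "iter_partial (i # is) f = partial_deriv i (iter_partial is f)"

definition smooth_fun :: "(real^'n::finite \<Rightarrow> real) \<Rightarrow> bool" where
  "smooth_fun f \<longleftrightarrow>
     (\<forall>is. continuous_on UNIV (iter_partial is f)) \<and>
     (\<forall>is i x. (\<lambda>t. iter_partial is f (x + t *\<^sub>R axis i 1)) differentiable (at 0))"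

definition C0_inf_punctured :: "(real^'n::finite \<Rightarrow> real) \<Rightarrow> bool" where
  "C0_inf_punctured f \<longleftrightarrow> smooth_fun f \<and>
     compact (closure {x. f x \<noteq> 0}) \<and> 0 \<notin> closure {x. f x \<noteq> 0}"

definition grad :: "(real^'n::finite \<Rightarrow> real) \<Rightarrow> real^'n \<Rightarrow> real^'n" where
  "grad f x = (\<chi> i. partial_deriv i f x)"

definition c_const :: "real \<Rightarrow> real" where
  "c_const p = Inf ((\<lambda>t. (1 - t) powr p - t powr p + p * t powr (p - 1)) ` {0<..1/2})"

end

theory Submission
  imports Defs
begin

text \<open>
  Write \<open>D f = x \<cdot> \<nabla>f\<close> for the radial derivative, \<open>\<gamma> = (n - p - \<alpha> p) / p\<close> and \<open>s = (\<alpha> + 1) p\<close>.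
  For \<open>p \<ge> 2\<close> the function \<open>|t|^p\<close> lies above its tangent lines with a quantitative gap:
  \<open>|a|^p \<ge> |b|^p + p |b|^(p-2) b (a - b) + c\<^sub>p |a - b|^p\<close>. Taking \<open>a = D f\<close>, \<open>b = -\<gamma> f\<close>,
  weighting with \<open>|x|^(-s)\<close> and integrating, the first-order term is a divergence
  (Euler's identity for the field \<open>|f|^p |x|^t x\<close>) and cancels against part of the zeroth-order
  term, which leaves \<open>\<integral> |\<nabla>f|^p |x|^(-\<alpha> p) - \<gamma>^p \<integral> |f|^p |x|^(-s) \<ge> c\<^sub>p \<integral> |D f + \<gamma> f|^p |x|^(-s)\<close>.
  Euler's identity also gives \<open>\<integral> (D f + \<gamma> f) |f|^(p-2) f |x|^\<delta>\<^sub>1 = \<kappa> \<integral> |f|^p |x|^\<delta>\<^sub>1\<close> with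
  \<open>|\<kappa>| = |n (p - 1) - p b| / p\<^sup>2\<close>, and H\<ouml>lder's inequality bounds the left side by
  \<open>(\<integral> |D f + \<gamma> f|^p |x|^(-s))^(1/p) (\<integral> |f|^p |x|^\<delta>\<^sub>2)^(1 - 1/p)\<close>.
\<close>

section \<open>A sharp convexity inequality for \<open>|t|^p\<close>\<close>

lemma has_real_derivative_abs_powr:
  fixes p x :: real
  assumes p: "1 < p"
  shows "((\<lambda>x. \<bar>x\<bar> powr p) has_real_derivative (p * \<bar>x\<bar> powr (p - 1) * sgn x)) (at x)"
proof (cases "x = 0")
  case True
  have "((\<lambda>y. \<bar>y\<bar> powr (p - 1)) \<longlongrightarrow> 0) (at 0)"
    by (rule tendsto_zero_powrI[where b="p - 1"]) (auto intro!: tendsto_eq_intros simp: p)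
  then have "((\<lambda>y. \<bar>\<bar>y\<bar> powr p / y\<bar>) \<longlongrightarrow> 0) (at 0)"
    by (rule Lim_transform_eventually)
      (auto simp: eventually_at_filter powr_diff abs_divide)
  then have "((\<lambda>y. \<bar>y\<bar> powr p / y) \<longlongrightarrow> 0) (at 0)"
    by (rule tendsto_rabs_zero_cancel)
  then show ?thesis
    using True by (simp add: has_field_derivative_iff)
next
  case False
  then consider "x > 0" | "x < 0" by linarith
  then show ?thesis
  proof cases
    case 1
    have "\<forall>\<^sub>F y in nhds x. \<bar>y\<bar> powr p = y powr p"
      using eventually_nhds_in_open[of "{0<..}" x] 1 by (auto elim!: eventually_mono)
    then show ?thesis
      using has_real_derivative_powr[OF 1, of p] 1 by (subst DERIV_cong_ev[OF refl _ refl]) simp_all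
  next
    case 2
    have "\<forall>\<^sub>F y in nhds x. \<bar>y\<bar> powr p = (- y) powr p"
      using eventually_nhds_in_open[of "{..<0}" x] 2 by (auto elim!: eventually_mono)
    moreover have "((\<lambda>y. (- y) powr p) has_real_derivative p * (- x) powr (p - real 1) * (- 1)) (at x)"
      by (rule DERIV_fun_powr) (auto intro!: derivative_eq_intros simp: 2)
    ultimately show ?thesis
      using 2 by (subst DERIV_cong_ev[OF refl _ refl]) simp_all
  qed
qed

lemma abs_powr_minus_one_sgn_mult:
  fixes u p :: real
  shows "\<bar>u\<bar> powr (p - 1) * sgn u * u = \<bar>u\<bar> powr p"
proof (cases "u = 0")
  case False
  have "\<bar>u\<bar> powr (p - 1) * sgn u * u = \<bar>u\<bar> powr (p - 1) * \<bar>u\<bar> powr 1"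
    using False by (simp add: mult.assoc sgn_mult_self_eq abs_if sgn_if)
  also have "\<dots> = \<bar>u\<bar> powr p"
    using False powr_add[of "\<bar>u\<bar>" "p - 1" 1] by simp
  finally show ?thesis .
qed simp

lemma MVT_open_interval:
  fixes f f' :: "real \<Rightarrow> real"
  assumes "a < b" and "continuous_on {a..b} f"
    and "\<And>x. a < x \<Longrightarrow> x < b \<Longrightarrow> (f has_real_derivative f' x) (at x)"
  obtains z where "a < z" "z < b" "f b - f a = (b - a) * f' z"
proof -
  obtain l z where "a < z" "z < b" "(f has_real_derivative l) (at z)" "f b - f a = (b - a) * l"
    using MVT[OF assms(1,2)] assms(3) by (meson real_differentiable_def)
  with assms(3) DERIV_unique show ?thesis
    by (metis that)
qed

lemma powr_diff_mean_value_bounds: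
  fixes a b q :: real
  assumes "0 \<le> a" "a < b" "1 \<le> q"
  shows "q * a powr (q - 1) * (b - a) \<le> b powr q - a powr q"
    and "b powr q - a powr q \<le> q * b powr (q - 1) * (b - a)"
proof -
  have cont: "continuous_on {a..b} (\<lambda>x. x powr q)"
    using assms by (intro continuous_on_powr') (auto intro: continuous_intros)
  have deriv: "((\<lambda>x. x powr q) has_real_derivative q * x powr (q - 1)) (at x)" if "a < x" for x
    using assms that by (intro has_real_derivative_powr) auto
  obtain z where z: "a < z" "z < b" "b powr q - a powr q = (b - a) * (q * z powr (q - 1))"
    using MVT_open_interval[OF assms(2) cont deriv] by blast
  have "a powr (q - 1) \<le> z powr (q - 1)" "z powr (q - 1) \<le> b powr (q - 1)"
    using z assms by (auto intro!: powr_mono2)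
  moreover have "0 \<le> (b - a) * q"
    using assms by simp
  ultimately have "(b - a) * q * a powr (q - 1) \<le> (b - a) * q * z powr (q - 1)"
    and "(b - a) * q * z powr (q - 1) \<le> (b - a) * q * b powr (q - 1)"
    by (simp_all add: mult_left_mono)
  with z(3) show "q * a powr (q - 1) * (b - a) \<le> b powr q - a powr q"
    and "b powr q - a powr q \<le> q * b powr (q - 1) * (b - a)"
    by (simp_all add: algebra_simps)
qed

text \<open>With \<open>t = b / (b - a)\<close>, the defect in the tangent-line inequality for \<open>|s|^p\<close> at \<open>b\<close>
  is \<open>|b - a|^p\<close> times this function; \<open>c_const\<close> is its infimum over \<open>(0, 1/2]\<close>.\<close>

definition tangent_defect :: "real \<Rightarrow> real \<Rightarrow> real" where
  "tangent_defect p t = \<bar>t - 1\<bar> powr p - \<bar>t\<bar> powr p + p * \<bar>t\<bar> powr (p - 1) * sgn t"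

lemma tangent_defect_small:
  "0 < t \<Longrightarrow> t \<le> 1/2 \<Longrightarrow> tangent_defect p t = (1 - t) powr p - t powr p + p * t powr (p - 1)"
  by (simp add: tangent_defect_def abs_if)

lemma tangent_defect_small_nonneg:
  assumes "2 \<le> p" "0 < t" "t \<le> 1/2"
  shows "0 \<le> tangent_defect p t"
proof -
  have "t powr p \<le> (1 - t) powr p"
    using assms by (intro powr_mono2) auto
  then show ?thesis
    using assms by (simp add: tangent_defect_small)
qed

lemma c_const_eq_Inf_tangent_defect: "c_const p = Inf (tangent_defect p ` {0<..1/2})"
  unfolding c_const_def by (intro arg_cong[where f=Inf] image_cong) (auto simp: tangent_defect_small)

lemma c_const_le_tangent_defect_small:
  assumes "2 \<le> p" "0 < t" "t \<le> 1/2"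
  shows "c_const p \<le> tangent_defect p t"
  unfolding c_const_eq_Inf_tangent_defect using assms tangent_defect_small_nonneg[OF assms(1)]
  by (intro cInf_lower) (auto intro!: bdd_belowI[where m=0])

lemma c_const_nonneg: "2 \<le> p \<Longrightarrow> 0 \<le> c_const p"
  unfolding c_const_eq_Inf_tangent_defect using tangent_defect_small_nonneg
  by (intro cInf_greatest) auto

lemma c_const_le_1:
  assumes "2 \<le> p"
  shows "c_const p \<le> 1"
proof -
  have "(p - 1) * 1 powr (p - 1 - 1) * (2 - 1) \<le> 2 powr (p - 1) - 1 powr (p - 1)"
    using assms by (intro powr_diff_mean_value_bounds(1)) auto
  then have "p * (1/2) powr (p - 1) \<le> 2 powr (p - 1) * (1/2) powr (p - 1)"
    by (intro mult_right_mono) auto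
  also have "\<dots> = 1"
    by (simp add: powr_mult[symmetric])
  finally have "tangent_defect p (1/2) \<le> 1"
    by (simp add: tangent_defect_small)
  then show ?thesis
    using c_const_le_tangent_defect_small[OF assms, of "1/2"] by simp
qed

lemma one_plus_powr_ge:
  fixes p u :: real
  assumes p: "2 \<le> p" and u: "0 \<le> u"
  shows "1 + u powr p + p * u powr (p - 1) \<le> (1 + u) powr p"
proof (cases "u = 0")
  case False
  with u have u0: "0 < u" by simp
  define \<phi> where "\<phi> x = (1 + x) powr p - x powr p - p * x powr (p - 1)" for x :: real
  define \<phi>' where "\<phi>' x = p * ((1 + x) powr (p - 1) - x powr (p - 1) - (p - 1) * x powr (p - 1 - 1))"
    for x :: real
  have "continuous_on {0..u} \<phi>"
    unfolding \<phi>_def using p by (intro continuous_intros continuous_on_powr') auto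
  moreover have "(\<phi> has_real_derivative \<phi>' x) (at x)" if "0 < x" for x
    unfolding \<phi>_def \<phi>'_def using that
    by (auto intro!: derivative_eq_intros DERIV_fun_powr[of "\<lambda>x. 1 + x" x 1 p]
        simp: algebra_simps)
  ultimately obtain z where z: "0 < z" "\<phi> u - \<phi> 0 = u * \<phi>' z"
    using MVT_open_interval[OF u0, of \<phi> \<phi>'] by auto
  have "(p - 1) * z powr (p - 1 - 1) * ((1 + z) - z) \<le> (1 + z) powr (p - 1) - z powr (p - 1)"
    using powr_diff_mean_value_bounds(1)[of z "1 + z" "p - 1"] z p by auto
  then have "0 \<le> \<phi>' z"
    using p by (simp add: \<phi>'_def)
  then have "0 \<le> \<phi> u - \<phi> 0"
    using z u0 by simp
  then show ?thesis
    by (simp add: \<phi>_def)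
qed simp

lemma tangent_defect_deriv_nonneg:
  fixes p z :: real
  assumes p: "2 \<le> p" and z: "1/2 < z"
  shows "0 \<le> \<bar>z - 1\<bar> powr (p - 1) * sgn (z - 1) - z powr (p - 1) + (p - 1) * z powr (p - 2)"
proof (cases "1 \<le> z")
  case True
  have "z powr (p - 1) - (z - 1) powr (p - 1) \<le> (p - 1) * z powr (p - 1 - 1) * (z - (z - 1))"
    using powr_diff_mean_value_bounds(2)[of "z - 1" z "p - 1"] True p by auto
  moreover have "\<bar>z - 1\<bar> powr (p - 1) * sgn (z - 1) = (z - 1) powr (p - 1)"
    using True by (cases "z = 1") auto
  ultimately show ?thesis
    by simp
next
  case False
  then have z0: "0 < 1 - z" "1 - z \<le> z"
    using z by auto
  \<comment> \<open>on \<open>(1/2, 1)\<close> the term \<open>(p - 1) z^(p-2)\<close> dominates \<open>(1 - z)^(p-1) + z^(p-1)\<close>\<close>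
  have "(1 - z) powr (p - 1) = (1 - z) * (1 - z) powr (p - 2)"
    using z0 powr_add[of "1 - z" 1 "p - 2"] by simp
  also have "\<dots> \<le> (1 - z) * z powr (p - 2)"
    using z0 p by (intro mult_left_mono powr_mono2) auto
  finally have "(1 - z) powr (p - 1) \<le> (1 - z) * z powr (p - 2)" .
  moreover have "z powr (p - 1) = z * z powr (p - 2)"
    using z powr_add[of z 1 "p - 2"] by simp
  moreover have "z powr (p - 2) \<le> (p - 1) * z powr (p - 2)"
    using p by (simp add: mult_le_cancel_right1)
  moreover have "\<bar>z - 1\<bar> powr (p - 1) * sgn (z - 1) = - ((1 - z) powr (p - 1))"
    using False by (simp add: abs_if)
  ultimately show ?thesis
    by (simp add: algebra_simps)
qed

lemma tangent_defect_ge_half: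
  assumes p: "2 \<le> p" and t: "1/2 < t"
  shows "tangent_defect p (1/2) \<le> tangent_defect p t"
proof -
  define H where "H x = \<bar>x - 1\<bar> powr p - x powr p + p * x powr (p - 1)" for x :: real
  define H' where "H' x = p * (\<bar>x - 1\<bar> powr (p - 1) * sgn (x - 1) - x powr (p - 1)
      + (p - 1) * x powr (p - 2))" for x :: real
  have H_deriv: "(H has_real_derivative H' x) (at x)" if "0 < x" for x
  proof -
    have "((\<lambda>x. \<bar>x - 1\<bar> powr p) has_real_derivative p * \<bar>x - 1\<bar> powr (p - 1) * sgn (x - 1) * 1) (at x)"
      using p by (intro DERIV_chain2[OF has_real_derivative_abs_powr]) (auto intro!: derivative_eq_intros)
    moreover have "((\<lambda>x. x powr p) has_real_derivative p * x powr (p - 1)) (at x)"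
      and "((\<lambda>x. x powr (p - 1)) has_real_derivative (p - 1) * x powr (p - 1 - 1)) (at x)"
      using has_real_derivative_powr that by blast+
    ultimately have "(H has_real_derivative p * \<bar>x - 1\<bar> powr (p - 1) * sgn (x - 1) * 1
        - p * x powr (p - 1) + p * ((p - 1) * x powr (p - 1 - 1))) (at x)"
      unfolding H_def by (intro DERIV_add DERIV_diff DERIV_cmult)
    then show ?thesis
      by (rule DERIV_cong) (simp add: H'_def algebra_simps)
  qed
  have "continuous_on {1/2..t} H"
    by (rule continuous_at_imp_continuous_on) (auto intro: DERIV_isCont[OF H_deriv])
  then obtain z where z: "1/2 < z" "z < t" "H t - H (1/2) = (t - 1/2) * H' z"
    using MVT_open_interval[OF t, of H H'] H_deriv by auto
  have "0 \<le> H' z"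
    unfolding H'_def using p tangent_defect_deriv_nonneg[OF p z(1)] by simp
  then have "0 \<le> (t - 1/2) * H' z"
    using z by simp
  then have "H (1/2) \<le> H t"
    using z by linarith
  then show ?thesis
    using t by (simp add: tangent_defect_def H_def)
qed

lemma c_const_le_tangent_defect:
  assumes p: "2 \<le> p"
  shows "c_const p \<le> tangent_defect p t"
proof -
  consider "t \<le> 0" | "0 < t" "t \<le> 1/2" | "1/2 < t" by linarith
  then show ?thesis
  proof cases
    case 1
    have "tangent_defect p t = (1 - t) powr p - (- t) powr p - p * (- t) powr (p - 1)"
      using 1 p by (cases "t = 0") (auto simp: tangent_defect_def abs_if)
    then have "1 \<le> tangent_defect p t"
      using one_plus_powr_ge[OF p, of "- t"] 1 by simp
    then show ?thesis
      using c_const_le_1[OF p] by simp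
  next
    case 2
    then show ?thesis
      using c_const_le_tangent_defect_small[OF p] by simp
  next
    case 3
    then show ?thesis
      using c_const_le_tangent_defect_small[OF p, of "1/2"] tangent_defect_ge_half[OF p 3] by simp
  qed
qed

lemma abs_powr_tangent_ineq:
  fixes a b p :: real
  assumes p: "2 \<le> p"
  shows "\<bar>b\<bar> powr p + p * \<bar>b\<bar> powr (p - 1) * sgn b * (a - b) + c_const p * \<bar>a - b\<bar> powr p
    \<le> \<bar>a\<bar> powr p"
proof (cases "a = b")
  case False
  define d where "d = b - a"
  define t where "t = b / d"
  have d0: "d \<noteq> 0"
    using False by (simp add: d_def)
  have b_eq: "b = d * t" and a_eq: "a = d * (t - 1)"
    using d0 by (auto simp: t_def d_def field_simps)
  have a_pow: "\<bar>a\<bar> powr p = \<bar>d\<bar> powr p * \<bar>t - 1\<bar> powr p"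
    and b_pow: "\<bar>b\<bar> powr p = \<bar>d\<bar> powr p * \<bar>t\<bar> powr p"
    by (simp_all add: a_eq b_eq abs_mult powr_mult)
  have diff: "a - b = - d"
    by (simp add: d_def)
  then have ab_pow: "\<bar>a - b\<bar> powr p = \<bar>d\<bar> powr p"
    by simp
  have "p * \<bar>b\<bar> powr (p - 1) * sgn b * (a - b)
      = - (p * \<bar>t\<bar> powr (p - 1) * sgn t) * (\<bar>d\<bar> powr (p - 1) * sgn d * d)"
    unfolding diff by (simp add: b_eq abs_mult powr_mult sgn_mult algebra_simps)
  also have "\<dots> = - (\<bar>d\<bar> powr p * (p * \<bar>t\<bar> powr (p - 1) * sgn t))"
    by (simp only: abs_powr_minus_one_sgn_mult) simp
  finally have grad_term: "p * \<bar>b\<bar> powr (p - 1) * sgn b * (a - b)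
      = - (\<bar>d\<bar> powr p * (p * \<bar>t\<bar> powr (p - 1) * sgn t))" .
  have "c_const p * \<bar>d\<bar> powr p \<le> tangent_defect p t * \<bar>d\<bar> powr p"
    using c_const_le_tangent_defect[OF p] by (intro mult_right_mono) auto
  then show ?thesis
    unfolding a_pow b_pow ab_pow grad_term tangent_defect_def by (simp add: algebra_simps)
qed simp

lemma abs_powr_tangent_ineq_at_neg_multiple:
  fixes d u \<gamma> p :: real
  assumes p: "2 \<le> p" and \<gamma>: "0 \<le> \<gamma>"
  shows "\<gamma> powr p * \<bar>u\<bar> powr p - \<gamma> powr (p - 1) * (p * \<bar>u\<bar> powr (p - 1) * sgn u * d)
      - p * \<gamma> powr p * \<bar>u\<bar> powr p + c_const p * \<bar>d + \<gamma> * u\<bar> powr p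
    \<le> \<bar>d\<bar> powr p"
proof -
  define S where "S = \<bar>u\<bar> powr (p - 1) * sgn u"
  have zeroth: "\<bar>- \<gamma> * u\<bar> powr p = \<gamma> powr p * \<bar>u\<bar> powr p"
    using \<gamma> by (simp add: abs_mult powr_mult)
  have first: "p * \<bar>- \<gamma> * u\<bar> powr (p - 1) * sgn (- \<gamma> * u) = - (p * \<gamma> powr (p - 1) * S)"
    using \<gamma> by (cases "\<gamma> = 0") (simp_all add: S_def abs_mult powr_mult sgn_mult)
  have "\<gamma> powr p * \<bar>u\<bar> powr p - p * \<gamma> powr (p - 1) * S * (d + \<gamma> * u)
      + c_const p * \<bar>d + \<gamma> * u\<bar> powr p \<le> \<bar>d\<bar> powr p"
    using abs_powr_tangent_ineq[OF p, where a = d and b = "- \<gamma> * u"]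
    unfolding zeroth first by simp
  moreover have "p * \<gamma> powr (p - 1) * S * (d + \<gamma> * u)
      = \<gamma> powr (p - 1) * (p * S * d) + p * \<gamma> powr p * \<bar>u\<bar> powr p"
  proof -
    have "\<gamma> powr (p - 1) * \<gamma> = \<gamma> powr p"
      using \<gamma> powr_add[of \<gamma> "p - 1" 1] by (cases "\<gamma> = 0") auto
    moreover have "p * \<gamma> powr (p - 1) * S * (d + \<gamma> * u)
        = \<gamma> powr (p - 1) * (p * S * d) + p * (\<gamma> powr (p - 1) * \<gamma>) * (S * u)"
      by (simp add: algebra_simps)
    ultimately show ?thesis
      unfolding S_def abs_powr_minus_one_sgn_mult by simp
  qed
  ultimately show ?thesis
    by (simp add: S_def mult.assoc)
qed

section \<open>Integrals of directional derivatives\<close>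

lemma lborel_integral_translate:
  fixes h :: "'a::euclidean_space \<Rightarrow> real"
  assumes "h \<in> borel_measurable borel"
  shows "(\<integral>x. h (c + x) \<partial>lborel) = (\<integral>x. h x \<partial>lborel)"
  using integral_distr[of "(+) c" lborel borel h, symmetric] assms by (simp add: lborel_distr_plus)

lemma lborel_integrable_translate:
  fixes h :: "'a::euclidean_space \<Rightarrow> real"
  assumes "h \<in> borel_measurable borel" and "integrable lborel h"
  shows "integrable lborel (\<lambda>x. h (c + x))"
  using integrable_distr_eq[of "(+) c" lborel borel h] assms by (simp add: lborel_distr_plus)

lemma integrable_bounded_compact_support:
  fixes g :: "'a::euclidean_space \<Rightarrow> real"
  assumes "g \<in> borel_measurable borel" and K: "compact K"
    and "\<And>x. x \<notin> K \<Longrightarrow> g x = 0" and "\<And>x. x \<in> K \<Longrightarrow> \<bar>g x\<bar> \<le> M"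
  shows "integrable lborel g"
proof (rule Bochner_Integration.integrable_bound)
  show "integrable lborel (\<lambda>x. M * indicator K x)"
    using K emeasure_compact_finite[OF K]
    by (intro integrable_mult_right integrable_real_indicator) (auto simp: compact_imp_closed borel_closed)
  show "AE x in lborel. norm (g x) \<le> norm (M * indicator K x)"
    using assms(3,4) by (intro AE_I2) (force simp: indicator_def intro: order_trans[OF _ abs_ge_self])
qed (use assms(1) in simp)

text \<open>The integral of a directional derivative vanishes: it is the limit of the difference
  quotients \<open>(h (x + e v) - h x) / e\<close>, whose integrals vanish by translation invariance,
  and the mean value theorem dominates these quotients.\<close>

lemma integral_directional_derivative_eq_0:
  fixes h h' :: "'a::euclidean_space \<Rightarrow> real"
  assumes h_meas: "h \<in> borel_measurable borel" and h_int: "integrable lborel h"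
    and supp: "\<And>x. R < norm x \<Longrightarrow> h x = 0"
    and deriv: "\<And>x s. ((\<lambda>s. h (x + s *\<^sub>R v)) has_real_derivative h' (x + s *\<^sub>R v)) (at s)"
    and bound: "\<And>x. \<bar>h' x\<bar> \<le> M"
  shows "integrable lborel h'" and "(\<integral>x. h' x \<partial>lborel) = 0"
proof -
  define e where "e k = inverse (real (Suc k))" for k
  define Q where "Q k x = (h (x + e k *\<^sub>R v) - h x) / e k" for k x
  have e: "0 < e k" "e k \<le> 1" for k
    by (auto simp: e_def field_simps)
  have Q_meas: "Q k \<in> borel_measurable lborel" for k
    unfolding Q_def using h_meas by measurable
  have Q_lim: "(\<lambda>k. Q k x) \<longlonglongrightarrow> h' x" for x
  proof -
    have "((\<lambda>s. (h (x + s *\<^sub>R v) - h x) / s) \<longlongrightarrow> h' x) (at 0)"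
      using deriv[of x 0] by (simp add: has_field_derivative_iff)
    moreover have "e \<longlonglongrightarrow> 0"
      unfolding e_def by (rule LIMSEQ_inverse_real_of_nat)
    then have "filterlim e (at 0) sequentially"
      unfolding filterlim_at using e(1) by (auto intro!: always_eventually simp: less_imp_neq[symmetric])
    ultimately show ?thesis
      unfolding Q_def by (rule filterlim_compose)
  qed
  have h'_meas: "h' \<in> borel_measurable lborel"
    by (rule borel_measurable_LIMSEQ_real[OF Q_lim Q_meas])
  define K where "K = cball (0::'a) (R + norm v)"
  have Q_bound: "norm (Q k x) \<le> M * indicator K x" for k x
  proof (cases "x \<in> K")
    case False
    then have "R + norm v < norm x"
      by (simp add: K_def)
    moreover have "norm x - e k * norm v \<le> norm (x + e k *\<^sub>R v)" "e k * norm v \<le> norm v"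
      using norm_triangle_ineq2[of x "- (e k *\<^sub>R v)"] e[of k] mult_left_le_one_le[of "norm v" "e k"]
      by auto
    ultimately have "R < norm (x + e k *\<^sub>R v)" "R < norm x"
      using norm_ge_zero[of v] by linarith+
    then show ?thesis
      using False by (simp add: Q_def supp)
  next
    case True
    obtain z where "0 < z" "z < e k"
      "h (x + e k *\<^sub>R v) - h (x + 0 *\<^sub>R v) = (e k - 0) * h' (x + z *\<^sub>R v)"
      using MVT2[OF e(1)[of k], of "\<lambda>s. h (x + s *\<^sub>R v)" "\<lambda>s. h' (x + s *\<^sub>R v)"] deriv by blast
    then have "Q k x = h' (x + z *\<^sub>R v)"
      using e[of k] by (simp add: Q_def)
    then show ?thesis
      using True bound by simp
  qed
  have dominating_int: "integrable lborel (\<lambda>x. M * indicator K x :: real)"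
    using emeasure_compact_finite[of K] by (intro integrable_mult_right integrable_real_indicator) (auto simp: K_def)
  have Q_integral: "(\<integral>x. Q k x \<partial>lborel) = 0" for k
  proof -
    have "integrable lborel (\<lambda>x. h (e k *\<^sub>R v + x))"
      by (rule lborel_integrable_translate[OF h_meas h_int])
    then have "(\<integral>x. Q k x \<partial>lborel) = ((\<integral>x. h (e k *\<^sub>R v + x) \<partial>lborel) - (\<integral>x. h x \<partial>lborel)) / e k"
      unfolding Q_def using h_int by (simp add: add.commute)
    then show ?thesis
      using lborel_integral_translate[OF h_meas] by simp
  qed
  show "integrable lborel h'"
    by (rule integrable_dominated_convergence[where s=Q, OF h'_meas _ dominating_int])
      (use Q_lim Q_bound Q_meas in auto)
  have "(\<lambda>k. \<integral>x. Q k x \<partial>lborel) \<longlonglongrightarrow> (\<integral>x. h' x \<partial>lborel)"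
    by (rule integral_dominated_convergence[where s=Q, OF h'_meas _ dominating_int])
      (use Q_lim Q_bound Q_meas in auto)
  then show "(\<integral>x. h' x \<partial>lborel) = 0"
    using Q_integral by (simp add: LIMSEQ_const_iff)
qed

section \<open>Test functions on the punctured space\<close>

lemma abs_mult_le_mult: "\<bar>a\<bar> \<le> A \<Longrightarrow> \<bar>b\<bar> \<le> B \<Longrightarrow> \<bar>a * b\<bar> \<le> (A * B :: real)"
  by (simp add: abs_mult mult_mono')

lemma abs_powr_le_powr: "\<bar>u\<bar> \<le> U \<Longrightarrow> 0 \<le> q \<Longrightarrow> \<bar>\<bar>u\<bar> powr q\<bar> \<le> U powr (q::real)"
  by (simp add: powr_mono2)

lemma abs_norm_powr_le_on_annulus:
  assumes "0 < r" "r \<le> norm y" "norm y \<le> R"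
  shows "\<bar>norm y powr t\<bar> \<le> r powr t + R powr t"
proof (cases "0 \<le> t")
  case True
  then have "norm y powr t \<le> R powr t"
    using assms by (intro powr_mono2) auto
  then show ?thesis
    by (simp add: add_increasing)
next
  case False
  then have "norm y powr t \<le> r powr t"
    using assms by (intro powr_mono2') auto
  then show ?thesis
    by (simp add: add_increasing2)
qed

lemma norm_bounded_if_zero_outside_compact:
  fixes g :: "'a::topological_space \<Rightarrow> 'b::real_normed_vector"
  assumes "compact K" "continuous_on UNIV g" "\<And>x. x \<notin> K \<Longrightarrow> g x = 0"
  obtains M where "\<And>x. norm (g x) \<le> M"
proof -
  have "compact (g ` K)"
    using assms by (intro compact_continuous_image) (auto intro: continuous_on_subset)
  then obtain B where "\<forall>y\<in>g ` K. norm y \<le> B"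
    using compact_imp_bounded bounded_pos by blast
  then have "norm (g x) \<le> max B 0" for x
    using assms(3)[of x] by (cases "x \<in> K") auto
  then show ?thesis
    using that by blast
qed

lemma has_real_derivative_norm_powr_along_axis:
  fixes x :: "real^'n::finite"
  assumes "x + s *\<^sub>R axis i 1 \<noteq> 0"
  shows "((\<lambda>u. norm (x + u *\<^sub>R axis i 1) powr t) has_real_derivative
           t * (x + s *\<^sub>R axis i 1) $ i * norm (x + s *\<^sub>R axis i 1) powr (t - 2)) (at s)"
proof -
  define y where "y = x + s *\<^sub>R axis i 1"
  have y0: "0 < norm y"
    using assms by (simp add: y_def)
  have "((\<lambda>u. x + u *\<^sub>R axis i (1::real)) has_derivative (\<lambda>h. h *\<^sub>R axis i 1)) (at s)"
    by (auto intro!: derivative_eq_intros)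
  from has_derivative_compose[OF this has_derivative_norm[of y, unfolded y_def]]
  have "((\<lambda>u. norm (x + u *\<^sub>R axis i 1)) has_derivative (\<lambda>h. inner (h *\<^sub>R axis i 1) (sgn y))) (at s)"
    using assms by (simp add: y_def)
  moreover have "(\<lambda>h. inner (h *\<^sub>R axis i 1) (sgn y)) = (*) (y $ i / norm y)"
    by (rule ext) (simp add: inner_axis' sgn_div_norm field_simps)
  ultimately have "((\<lambda>u. norm (x + u *\<^sub>R axis i 1)) has_real_derivative y $ i / norm y) (at s)"
    by (simp add: has_field_derivative_def)
  then have "((\<lambda>u. norm (x + u *\<^sub>R axis i 1) powr t) has_real_derivative
      t * norm y powr (t - real 1) * (y $ i / norm y)) (at s)"
    unfolding y_def by (rule DERIV_fun_powr) (use y0 in \<open>simp add: y_def\<close>)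
  moreover have "t * norm y powr (t - real 1) * (y $ i / norm y) = t * y $ i * norm y powr (t - 2)"
  proof -
    have "norm y powr (t - real 1) / norm y = norm y powr (t - 2)"
      using y0 powr_diff[of "norm y" "t - 1" 1] by simp
    then show ?thesis
      by (metis times_divide_eq_right mult.commute mult.left_commute)
  qed
  ultimately show ?thesis
    unfolding y_def[symmetric] by (rule DERIV_cong)
qed

definition tsupport :: "('a::topological_space \<Rightarrow> 'b::zero) \<Rightarrow> 'a set" where
  "tsupport g = closure {x. g x \<noteq> 0}"

locale punctured_test_function =
  fixes f :: "real^'n::finite \<Rightarrow> real"
  assumes C0_inf_punctured: "C0_inf_punctured f"
begin

lemma compact_tsupport: "compact (tsupport f)"
  and zero_notin_tsupport: "0 \<notin> tsupport f"
  using C0_inf_punctured by (auto simp: C0_inf_punctured_def tsupport_def)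

lemma eq_0_outside_tsupport: "x \<notin> tsupport f \<Longrightarrow> f x = 0"
  using closure_subset[of "{x. f x \<noteq> 0}"] by (auto simp: tsupport_def)

lemma tsupport_in_annulus:
  obtains r R where "0 < r" "0 < R" "\<And>y. y \<in> tsupport f \<Longrightarrow> r \<le> norm y \<and> norm y \<le> R"
proof -
  obtain r where r: "0 < r" "ball 0 r \<subseteq> - tsupport f"
    using zero_notin_tsupport compact_tsupport
    by (meson ComplI compact_imp_closed open_Compl open_contains_ball)
  obtain R where "0 < R" "\<And>y. y \<in> tsupport f \<Longrightarrow> norm y \<le> R"
    using compact_imp_bounded[OF compact_tsupport] bounded_pos by blast
  with r show ?thesis
    using that by (force simp: subset_eq)
qed

lemma continuous_on_f: "continuous_on UNIV f"
  using C0_inf_punctured unfolding C0_inf_punctured_def smooth_fun_def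
  by (metis iter_partial.simps(1))

lemma continuous_on_partial_deriv: "continuous_on UNIV (partial_deriv i f)"
  using C0_inf_punctured iter_partial.simps unfolding C0_inf_punctured_def smooth_fun_def
  by metis

lemma has_real_derivative_along_axis:
  "((\<lambda>s. f (x + s *\<^sub>R axis i 1)) has_real_derivative partial_deriv i f (x + s *\<^sub>R axis i 1)) (at s)"
proof -
  define y where "y = x + s *\<^sub>R axis i 1"
  have "(\<lambda>u. f (y + u *\<^sub>R axis i 1)) differentiable (at 0)"
    using C0_inf_punctured iter_partial.simps(1) unfolding C0_inf_punctured_def smooth_fun_def by metis
  then have "((\<lambda>u. f (y + u *\<^sub>R axis i 1)) has_real_derivative partial_deriv i f y) (at (s + - s))"
    unfolding partial_deriv_def using DERIV_deriv_iff_real_differentiable by simp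
  then have "((\<lambda>u. f (y + (u + - s) *\<^sub>R axis i 1)) has_real_derivative partial_deriv i f y) (at s)"
    by (subst (asm) DERIV_shift) simp
  moreover have "(\<lambda>u. f (y + (u + - s) *\<^sub>R axis i 1)) = (\<lambda>u. f (x + u *\<^sub>R axis i 1))"
    by (simp add: y_def algebra_simps)
  ultimately show ?thesis
    by (simp add: y_def)
qed

lemma partial_deriv_eq_0_outside_tsupport:
  assumes "x \<notin> tsupport f"
  shows "partial_deriv i f x = 0"
proof -
  define S where "S = (\<lambda>u. x + u *\<^sub>R axis i (1::real)) -` (- tsupport f)"
  have "open S"
    unfolding S_def using compact_tsupport
    by (intro continuous_open_vimage) (auto intro!: continuous_intros simp: compact_imp_closed open_Compl)
  moreover have "0 \<in> S"
    using assms by (simp add: S_def)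
  moreover have "\<And>u. u \<in> S \<Longrightarrow> 0 = f (x + u *\<^sub>R axis i 1)"
    using eq_0_outside_tsupport by (auto simp: S_def)
  ultimately have "((\<lambda>u. f (x + u *\<^sub>R axis i 1)) has_real_derivative 0) (at 0)"
    by (intro has_field_derivative_transform_within_open[OF DERIV_const]) auto
  then show ?thesis
    unfolding partial_deriv_def by (rule DERIV_imp_deriv)
qed

lemma continuous_on_grad: "continuous_on UNIV (grad f)"
  unfolding grad_def by (intro continuous_on_vec_lambda continuous_on_partial_deriv)

lemma grad_eq_0_outside_tsupport: "y \<notin> tsupport f \<Longrightarrow> grad f y = 0"
  by (simp add: grad_def vec_eq_iff partial_deriv_eq_0_outside_tsupport)

lemma abs_partial_deriv_le_norm_grad: "\<bar>partial_deriv i f y\<bar> \<le> norm (grad f y)"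
  using component_le_norm_cart[of "grad f y" i] by (simp add: grad_def)

lemma borel_measurable_f [measurable]: "f \<in> borel_measurable borel"
  by (rule borel_measurable_continuous_onI[OF continuous_on_f])

lemma bounded_f_grad:
  obtains B where "0 < B" "\<And>y. \<bar>f y\<bar> \<le> B" "\<And>y. norm (grad f y) \<le> B"
proof -
  obtain B1 where "\<And>y. norm (f y) \<le> B1"
    using norm_bounded_if_zero_outside_compact[OF compact_tsupport continuous_on_f eq_0_outside_tsupport]
    by blast
  moreover obtain B2 where "\<And>y. norm (grad f y) \<le> B2"
    using norm_bounded_if_zero_outside_compact[OF compact_tsupport continuous_on_grad grad_eq_0_outside_tsupport]
    by blast
  ultimately show ?thesis
    using that[of "max 1 (max B1 B2)"] by (force simp: le_max_iff_disj)
qed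

lemma integrable_if_bounded_on_tsupport:
  fixes g :: "real^'n \<Rightarrow> real"
  assumes "g \<in> borel_measurable borel" "\<And>y. y \<notin> tsupport f \<Longrightarrow> g y = 0"
    "\<And>y. y \<in> tsupport f \<Longrightarrow> \<bar>g y\<bar> \<le> M"
  shows "integrable lborel g"
  by (rule integrable_bounded_compact_support[OF assms(1) compact_tsupport assms(2,3)])

lemma integrable_abs_powr_mult_norm_powr:
  fixes h :: "real^'n \<Rightarrow> real"
  assumes h_cont: "continuous_on UNIV h" and h_out: "\<And>y. y \<notin> tsupport f \<Longrightarrow> h y = 0"
    and p: "0 \<le> p"
  shows "integrable lborel (\<lambda>y. \<bar>h y\<bar> powr p * norm y powr t)"
proof -
  obtain r R where "0 < r" "0 < R"
    and annulus: "\<And>y. y \<in> tsupport f \<Longrightarrow> r \<le> norm y \<and> norm y \<le> R"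
    using tsupport_in_annulus by auto
  obtain M where M: "\<And>y. norm (h y) \<le> M"
    using norm_bounded_if_zero_outside_compact[OF compact_tsupport h_cont h_out] by blast
  note [measurable] = borel_measurable_continuous_onI[OF h_cont]
  show ?thesis
  proof (rule integrable_if_bounded_on_tsupport)
    show "\<bar>h y\<bar> powr p * norm y powr t = 0" if "y \<notin> tsupport f" for y
      using h_out[OF that] by simp
    show "\<bar>\<bar>h y\<bar> powr p * norm y powr t\<bar> \<le> M powr p * (r powr t + R powr t)" if "y \<in> tsupport f" for y
    proof (rule abs_mult_le_mult)
      show "\<bar>\<bar>h y\<bar> powr p\<bar> \<le> M powr p"
        using M[of y] p by (intro abs_powr_le_powr) auto
      show "\<bar>norm y powr t\<bar> \<le> r powr t + R powr t"
        using \<open>0 < r\<close> annulus that by (intro abs_norm_powr_le_on_annulus) auto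
    qed
  qed measurable
qed

end

section \<open>The divergence of the weighted radial field\<close>

context punctured_test_function
begin

text \<open>The \<open>i\<close>-th partial derivative of the \<open>i\<close>-th component of \<open>y \<mapsto> |f y|^p |y|^t y\<close>.\<close>

definition radial_field_partial :: "real \<Rightarrow> real \<Rightarrow> 'n \<Rightarrow> real^'n \<Rightarrow> real" where
  "radial_field_partial p t i y =
     p * \<bar>f y\<bar> powr (p - 1) * sgn (f y) * partial_deriv i f y * y $ i * norm y powr t
     + \<bar>f y\<bar> powr p * (norm y powr t + t * (y $ i)\<^sup>2 * norm y powr (t - 2))"

lemma has_real_derivative_radial_field_nonzero:
  assumes p: "1 < p" and y0: "x + s *\<^sub>R axis i 1 \<noteq> 0"
  shows "((\<lambda>u. \<bar>f (x + u *\<^sub>R axis i 1)\<bar> powr p * (x + u *\<^sub>R axis i 1) $ i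
             * norm (x + u *\<^sub>R axis i 1) powr t)
          has_real_derivative radial_field_partial p t i (x + s *\<^sub>R axis i 1)) (at s)"
proof -
  define y where "y = x + s *\<^sub>R axis i 1"
  have dF: "((\<lambda>u. \<bar>f (x + u *\<^sub>R axis i 1)\<bar> powr p) has_real_derivative
      p * \<bar>f y\<bar> powr (p - 1) * sgn (f y) * partial_deriv i f y) (at s)"
    using DERIV_chain2[OF has_real_derivative_abs_powr[OF p] has_real_derivative_along_axis]
    by (simp add: y_def)
  have dA: "((\<lambda>u. (x + u *\<^sub>R axis i 1) $ i) has_real_derivative 1) (at s)"
    by (auto intro!: derivative_eq_intros)
  have dW: "((\<lambda>u. norm (x + u *\<^sub>R axis i 1) powr t) has_real_derivative
      t * y $ i * norm y powr (t - 2)) (at s)"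
    using has_real_derivative_norm_powr_along_axis[OF y0] by (simp add: y_def)
  have "((\<lambda>u. \<bar>f (x + u *\<^sub>R axis i 1)\<bar> powr p * (x + u *\<^sub>R axis i 1) $ i
      * norm (x + u *\<^sub>R axis i 1) powr t) has_real_derivative
      (p * \<bar>f y\<bar> powr (p - 1) * sgn (f y) * partial_deriv i f y * (x + s *\<^sub>R axis i 1) $ i
        + 1 * \<bar>f (x + s *\<^sub>R axis i 1)\<bar> powr p) * norm (x + s *\<^sub>R axis i 1) powr t
      + t * y $ i * norm y powr (t - 2)
        * (\<bar>f (x + s *\<^sub>R axis i 1)\<bar> powr p * (x + s *\<^sub>R axis i 1) $ i)) (at s)"
    by (rule DERIV_mult[OF DERIV_mult[OF dF dA] dW])
  then show ?thesis
    unfolding y_def[symmetric]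
    by (rule DERIV_cong) (simp add: radial_field_partial_def power2_eq_square algebra_simps)
qed

lemma has_real_derivative_radial_field:
  assumes p: "1 < p"
  shows "((\<lambda>u. \<bar>f (x + u *\<^sub>R axis i 1)\<bar> powr p * (x + u *\<^sub>R axis i 1) $ i
             * norm (x + u *\<^sub>R axis i 1) powr t)
          has_real_derivative radial_field_partial p t i (x + s *\<^sub>R axis i 1)) (at s)"
    (is "(?g has_real_derivative _) _")
proof (cases "x + s *\<^sub>R axis i 1 = 0")
  case True
  \<comment> \<open>near the origin everything vanishes identically\<close>
  obtain r R where "0 < r" "0 < R"
    and annulus: "\<And>y. y \<in> tsupport f \<Longrightarrow> r \<le> norm y \<and> norm y \<le> R"
    using tsupport_in_annulus by auto
  have outside: "z \<notin> tsupport f" if "norm z < r" for z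
    using that annulus[of z] by auto
  define S where "S = (\<lambda>u. x + u *\<^sub>R axis i (1::real)) -` {z. norm z < r}"
  have "open S"
    unfolding S_def by (intro continuous_open_vimage) (auto intro!: continuous_intros open_Collect_less)
  moreover have "s \<in> S"
    using True \<open>0 < r\<close> by (simp add: S_def)
  moreover have "0 = ?g u" if "u \<in> S" for u
    using that outside by (simp add: S_def eq_0_outside_tsupport)
  ultimately have "(?g has_real_derivative 0) (at s)"
    by (rule has_field_derivative_transform_within_open[OF DERIV_const])
  moreover have "radial_field_partial p t i (x + s *\<^sub>R axis i 1) = 0"
    using True zero_notin_tsupport
    by (simp add: radial_field_partial_def eq_0_outside_tsupport partial_deriv_eq_0_outside_tsupport)
  ultimately show ?thesis
    by simp
qed (rule has_real_derivative_radial_field_nonzero[OF p])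

lemma sum_radial_field_partial:
  "(\<Sum>i\<in>UNIV. radial_field_partial p t i y)
    = p * \<bar>f y\<bar> powr (p - 1) * sgn (f y) * inner y (grad f y) * norm y powr t
      + (real CARD('n) + t) * (\<bar>f y\<bar> powr p * norm y powr t)"
proof (cases "y = 0")
  case True
  then have "f y = 0"
    using eq_0_outside_tsupport zero_notin_tsupport by blast
  then show ?thesis
    by (simp add: radial_field_partial_def)
next
  case False
  define a where "a = p * \<bar>f y\<bar> powr (p - 1) * sgn (f y) * norm y powr t"
  define F where "F = \<bar>f y\<bar> powr p"
  have "radial_field_partial p t i y = a * (y $ i * partial_deriv i f y) + F * norm y powr t
      + F * t * norm y powr (t - 2) * (y $ i)\<^sup>2" for i
    by (simp add: radial_field_partial_def a_def F_def algebra_simps)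
  then have "(\<Sum>i\<in>UNIV. radial_field_partial p t i y)
      = a * (\<Sum>i\<in>UNIV. y $ i * partial_deriv i f y) + real CARD('n) * (F * norm y powr t)
        + F * t * norm y powr (t - 2) * (\<Sum>i\<in>UNIV. (y $ i)\<^sup>2)"
    by (simp add: sum.distrib sum_distrib_left)
  also have "(\<Sum>i\<in>UNIV. y $ i * partial_deriv i f y) = inner y (grad f y)"
    by (simp add: inner_vec_def grad_def)
  also have "(\<Sum>i\<in>UNIV. (y $ i)\<^sup>2) = (norm y)\<^sup>2"
    using power2_norm_eq_inner[of y] by (simp add: inner_vec_def power2_eq_square)
  also have "F * t * norm y powr (t - 2) * (norm y)\<^sup>2 = t * (F * norm y powr t)"
    using False powr_add[of "norm y" "t - 2" 2] by simp
  finally show ?thesis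
    by (simp add: a_def F_def algebra_simps)
qed

lemma radial_field_partial_bounded:
  assumes p: "1 < p"
  obtains M where "\<And>y. \<bar>radial_field_partial p t i y\<bar> \<le> M"
proof -
  obtain r R where "0 < r" "0 < R"
    and annulus: "\<And>y. y \<in> tsupport f \<Longrightarrow> r \<le> norm y \<and> norm y \<le> R"
    using tsupport_in_annulus by auto
  obtain B where B: "0 < B" "\<And>y. \<bar>f y\<bar> \<le> B" "\<And>y. norm (grad f y) \<le> B"
    using bounded_f_grad by auto
  have weight: "\<bar>norm y powr q\<bar> \<le> r powr q + R powr q" if "y \<in> tsupport f" for y q
    using \<open>0 < r\<close> annulus that by (intro abs_norm_powr_le_on_annulus) auto
  have coord: "\<bar>y $ i\<bar> \<le> R" if "y \<in> tsupport f" for y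
    using component_le_norm_cart[of y i] annulus[OF that] by linarith
  have f_pow: "\<bar>\<bar>f y\<bar> powr q\<bar> \<le> B powr q" if "0 \<le> q" for y q
    using B(2) that by (rule abs_powr_le_powr)
  have partial: "\<bar>partial_deriv i f y\<bar> \<le> B" for y
    using abs_partial_deriv_le_norm_grad[of i y] B(3)[of y] by linarith
  define M where "M = p * B powr (p - 1) * 1 * B * R * (r powr t + R powr t)
    + B powr p * ((r powr t + R powr t) + \<bar>t\<bar> * R\<^sup>2 * (r powr (t - 2) + R powr (t - 2)))"
  have "\<bar>radial_field_partial p t i y\<bar> \<le> M" for y
  proof (cases "y \<in> tsupport f")
    case True
    have "\<bar>sgn (f y)\<bar> \<le> 1"
      by (simp add: abs_sgn_eq)
    moreover have "\<bar>(y $ i)\<^sup>2\<bar> \<le> R\<^sup>2"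
      using power_mono[OF coord[OF True] abs_ge_zero, of 2] by simp
    ultimately show ?thesis
      unfolding radial_field_partial_def M_def using p True
      by (intro abs_triangle_ineq[THEN order_trans] add_mono abs_mult_le_mult f_pow coord weight partial)
        auto
  next
    case False
    have "0 \<le> M"
      using B \<open>0 < r\<close> \<open>0 < R\<close> p unfolding M_def by (intro add_nonneg_nonneg mult_nonneg_nonneg) auto
    then show ?thesis
      using eq_0_outside_tsupport[OF False] partial_deriv_eq_0_outside_tsupport[OF False] p
      by (simp add: radial_field_partial_def)
  qed
  then show ?thesis
    using that by blast
qed

lemma radial_field_partial_integral_eq_0:
  assumes p: "1 < p"
  shows "integrable lborel (radial_field_partial p t i)"
    and "(\<integral>y. radial_field_partial p t i y \<partial>lborel) = 0"
proof -
  obtain r R where "0 < r" "0 < R"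
    and annulus: "\<And>y. y \<in> tsupport f \<Longrightarrow> r \<le> norm y \<and> norm y \<le> R"
    using tsupport_in_annulus by auto
  obtain B where B: "\<And>y. \<bar>f y\<bar> \<le> B"
    using bounded_f_grad by meson
  obtain M where bound: "\<And>y. \<bar>radial_field_partial p t i y\<bar> \<le> M"
    using radial_field_partial_bounded[OF p] by auto
  define h where "h y = \<bar>f y\<bar> powr p * y $ i * norm y powr t" for y
  have h_meas: "h \<in> borel_measurable borel"
    unfolding h_def by measurable
  have h_int: "integrable lborel h"
  proof (rule integrable_if_bounded_on_tsupport[OF h_meas])
    show "h y = 0" if "y \<notin> tsupport f" for y
      using eq_0_outside_tsupport[OF that] p by (simp add: h_def)
    show "\<bar>h y\<bar> \<le> B powr p * R * (r powr t + R powr t)" if "y \<in> tsupport f" for y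
      unfolding h_def using p that \<open>0 < r\<close> annulus[OF that] component_le_norm_cart[of y i]
      by (intro abs_mult_le_mult abs_powr_le_powr B abs_norm_powr_le_on_annulus) auto
  qed
  have h_supp: "h y = 0" if "R < norm y" for y
    using that annulus[of y] eq_0_outside_tsupport[of y] p by (force simp: h_def)
  have deriv: "((\<lambda>s. h (x + s *\<^sub>R axis i 1)) has_real_derivative
      radial_field_partial p t i (x + s *\<^sub>R axis i 1)) (at s)" for x s
    unfolding h_def by (rule has_real_derivative_radial_field[OF p])
  show "integrable lborel (radial_field_partial p t i)"
    and "(\<integral>y. radial_field_partial p t i y \<partial>lborel) = 0"
    using integral_directional_derivative_eq_0[OF h_meas h_int h_supp deriv bound] by auto
qed

theorem euler_identity:
  assumes p: "1 < p"
  shows "integrable lborel (\<lambda>y. p * \<bar>f y\<bar> powr (p - 1) * sgn (f y) * inner y (grad f y) * norm y powr t)"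
    and "(\<integral>y. p * \<bar>f y\<bar> powr (p - 1) * sgn (f y) * inner y (grad f y) * norm y powr t \<partial>lborel)
         = - (real CARD('n) + t) * (\<integral>y. \<bar>f y\<bar> powr p * norm y powr t \<partial>lborel)"
proof -
  have divergence_int: "integrable lborel (\<lambda>y. \<Sum>i\<in>UNIV. radial_field_partial p t i y)"
    using radial_field_partial_integral_eq_0(1)[OF p] by (intro Bochner_Integration.integrable_sum) auto
  have divergence_integral: "(\<integral>y. (\<Sum>i\<in>UNIV. radial_field_partial p t i y) \<partial>lborel) = 0"
    using radial_field_partial_integral_eq_0[OF p] by (subst Bochner_Integration.integral_sum) auto
  have weight_int: "integrable lborel (\<lambda>y. \<bar>f y\<bar> powr p * norm y powr t)"
    using p by (intro integrable_abs_powr_mult_norm_powr continuous_on_f eq_0_outside_tsupport) auto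
  have "(\<lambda>y. p * \<bar>f y\<bar> powr (p - 1) * sgn (f y) * inner y (grad f y) * norm y powr t)
      = (\<lambda>y. (\<Sum>i\<in>UNIV. radial_field_partial p t i y)
             - (real CARD('n) + t) * (\<bar>f y\<bar> powr p * norm y powr t))"
    by (simp add: sum_radial_field_partial)
  then show "integrable lborel (\<lambda>y. p * \<bar>f y\<bar> powr (p - 1) * sgn (f y) * inner y (grad f y) * norm y powr t)"
    and "(\<integral>y. p * \<bar>f y\<bar> powr (p - 1) * sgn (f y) * inner y (grad f y) * norm y powr t \<partial>lborel)
         = - (real CARD('n) + t) * (\<integral>y. \<bar>f y\<bar> powr p * norm y powr t \<partial>lborel)"
    using divergence_int divergence_integral weight_int by (simp_all add: algebra_simps)
qed

end

section \<open>A H\<ouml>lder inequality via Young's inequality\<close>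

text \<open>Optimising Young's inequality \<open>X \<le> e^p A / p + e^(-q) B / q\<close> over the scale \<open>e\<close>
  gives \<open>X \<le> A^(1/p) B^(1/q)\<close>.\<close>

lemma nonpos_if_le_mult_powr:
  fixes X C r :: real
  assumes C: "0 \<le> C" and r: "r \<noteq> 0" and le: "\<And>e. 0 < e \<Longrightarrow> X \<le> C * e powr r"
  shows "X \<le> 0"
proof (rule ccontr)
  assume "\<not> X \<le> 0"
  then have X: "0 < X" by simp
  show False
  proof (cases "C = 0")
    case True
    then show False
      using le[of 1] X by simp
  next
    case False
    define e where "e = (X / (2 * C)) powr (1 / r)"
    have "C * e powr r = X / 2"
      using X C False r by (simp add: e_def powr_powr)
    moreover have "0 < e"
      using X C False by (simp add: e_def)
    ultimately have "X \<le> X / 2"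
      using le by metis
    then show False
      using X by simp
  qed
qed

lemma powr_le_of_scaled_Young_bounds_pos:
  fixes X A B p :: real
  assumes p: "1 < p" and X: "0 \<le> X" and A: "0 < A" and B: "0 < B"
    and Young: "\<And>e. 0 < e \<Longrightarrow> X \<le> e powr p / p * A + e powr (- (p / (p - 1))) / (p / (p - 1)) * B"
  shows "X powr p \<le> A * B powr (p - 1)"
proof -
  define q where "q = p / (p - 1)"
  define a where "a = A powr (1 / p)"
  define b where "b = B powr (1 / p)"
  have a0: "0 < a" and b0: "0 < b"
    using A B by (auto simp: a_def b_def)
  have A_eq: "A = a powr p" and B_eq: "B = b powr p"
    using A B p by (auto simp: a_def b_def powr_powr)
  \<comment> \<open>the optimal scale balances the two terms of Young's inequality\<close>
  define e where "e = (b / a) powr ((p - 1) / p)"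
  have "e powr p / p * A = a * b powr (p - 1) / p"
  proof -
    have "e powr p * A = b powr (p - 1) / a powr (p - 1) * a powr p"
      using p a0 b0 by (simp add: e_def A_eq powr_powr powr_divide)
    also have "\<dots> = b powr (p - 1) * a"
      using a0 by (simp add: powr_diff)
    finally show ?thesis
      by simp
  qed
  moreover have "e powr (- q) / q * B = a * b powr (p - 1) * ((p - 1) / p)"
  proof -
    have "e powr (- q) = a / b"
      using p a0 b0 by (simp add: e_def q_def powr_powr powr_minus_divide)
    then have "e powr (- q) * B = a * b powr (p - 1)"
      using b0 by (simp add: B_eq powr_diff)
    then show ?thesis
      using p by (simp add: q_def field_simps)
  qed
  moreover have "0 < e"
    using a0 b0 by (simp add: e_def)
  ultimately have "X \<le> a * b powr (p - 1)"
    using Young[of e] p by (simp add: q_def field_simps)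
  then have "X powr p \<le> (a * b powr (p - 1)) powr p"
    using X p by (intro powr_mono2) auto
  also have "\<dots> = A * B powr (p - 1)"
    using a0 b0 by (simp add: A_eq B_eq powr_mult powr_powr mult.commute)
  finally show ?thesis .
qed

lemma powr_le_of_scaled_Young_bounds:
  fixes X A B p :: real
  assumes p: "1 < p" and X: "0 \<le> X" and A: "0 \<le> A" and B: "0 \<le> B"
    and Young: "\<And>e. 0 < e \<Longrightarrow> X \<le> e powr p / p * A + e powr (- (p / (p - 1))) / (p / (p - 1)) * B"
  shows "X powr p \<le> A * B powr (p - 1)"
proof (cases "0 < A \<and> 0 < B")
  case True
  then show ?thesis
    using powr_le_of_scaled_Young_bounds_pos[OF p X _ _ Young] by blast
next
  case False
  define q where "q = p / (p - 1)"
  have q: "0 < q"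
    using p by (simp add: q_def)
  have "X \<le> 0"
  proof (cases "A = 0")
    case True
    have "X \<le> B / q * e powr (- q)" if "0 < e" for e
      using Young[OF that] True by (simp add: q_def algebra_simps)
    then show ?thesis
      using B q by (intro nonpos_if_le_mult_powr[of "B / q" "- q"]) auto
  next
    case False
    with \<open>\<not> (0 < A \<and> 0 < B)\<close> A B have "B = 0"
      by simp
    then have "X \<le> A / p * e powr p" if "0 < e" for e
      using Young[OF that] by (simp add: mult.commute)
    then show ?thesis
      using A p by (intro nonpos_if_le_mult_powr[of "A / p" p]) auto
  qed
  then show ?thesis
    using X A B p by simp
qed

lemma Holder_inequality_integral:
  fixes u v :: "'a \<Rightarrow> real"
  assumes p: "1 < p" and u: "\<And>x. 0 \<le> u x" and v: "\<And>x. 0 \<le> v x"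
    and uv_int: "integrable M (\<lambda>x. u x * v x)"
    and u_int: "integrable M (\<lambda>x. u x powr p)"
    and v_int: "integrable M (\<lambda>x. v x powr (p / (p - 1)))"
  shows "(\<integral>x. u x * v x \<partial>M) powr p
    \<le> (\<integral>x. u x powr p \<partial>M) * (\<integral>x. v x powr (p / (p - 1)) \<partial>M) powr (p - 1)"
proof (rule powr_le_of_scaled_Young_bounds[OF p])
  define q where "q = p / (p - 1)"
  have q: "1 < q" "1 / p + 1 / q = 1"
    using p by (simp_all add: q_def field_simps)
  fix e :: real
  assume e: "0 < e"
  have "u x * v x \<le> e powr p / p * u x powr p + e powr (- q) / q * v x powr q" for x
  proof -
    have "u x * v x = (e * u x) * (v x / e)"
      using e by simp
    also have "\<dots> \<le> (e * u x) powr p / p + (v x / e) powr q / q"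
      using p q e u v by (intro Youngs_inequality) auto
    also have "\<dots> = e powr p / p * u x powr p + e powr (- q) / q * v x powr q"
      using e u v by (simp add: powr_mult powr_divide powr_minus_divide)
    finally show ?thesis .
  qed
  then have "(\<integral>x. u x * v x \<partial>M)
      \<le> (\<integral>x. e powr p / p * u x powr p + e powr (- q) / q * v x powr q \<partial>M)"
    using uv_int u_int v_int by (intro integral_mono) (auto simp: q_def)
  also have "\<dots> = e powr p / p * (\<integral>x. u x powr p \<partial>M) + e powr (- q) / q * (\<integral>x. v x powr q \<partial>M)"
    using u_int v_int by (simp add: q_def)
  finally show "(\<integral>x. u x * v x \<partial>M)
      \<le> e powr p / p * (\<integral>x. u x powr p \<partial>M)
        + e powr - (p / (p - 1)) / (p / (p - 1)) * (\<integral>x. v x powr (p / (p - 1)) \<partial>M)"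
    by (simp add: q_def)
qed (use u v in \<open>auto intro: integral_nonneg_AE mult_nonneg_nonneg\<close>)

section \<open>The remainder estimate\<close>

context punctured_test_function
begin

definition radial_derivative :: "real^'n \<Rightarrow> real" where
  "radial_derivative x = inner x (grad f x)"

lemma continuous_on_radial_derivative: "continuous_on UNIV radial_derivative"
  unfolding radial_derivative_def[abs_def] by (intro continuous_intros continuous_on_grad)

lemma radial_derivative_eq_0_outside_tsupport: "x \<notin> tsupport f \<Longrightarrow> radial_derivative x = 0"
  by (simp add: radial_derivative_def grad_eq_0_outside_tsupport)

lemma integrable_combination_powr:
  assumes "0 \<le> p"
  shows "integrable lborel (\<lambda>x. \<bar>radial_derivative x + \<gamma> * f x\<bar> powr p * norm x powr t)"
  using assms
  by (intro integrable_abs_powr_mult_norm_powr)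
    (auto intro!: continuous_intros continuous_on_radial_derivative continuous_on_f
      simp: radial_derivative_eq_0_outside_tsupport eq_0_outside_tsupport)

lemma integral_radial_derivative_le_grad:
  assumes p: "0 \<le> p"
  shows "(\<integral>x. \<bar>radial_derivative x\<bar> powr p * norm x powr (- s) \<partial>lborel)
    \<le> (\<integral>x. norm (grad f x) powr p * norm x powr (p - s) \<partial>lborel)"
proof (rule integral_mono)
  show "integrable lborel (\<lambda>x. \<bar>radial_derivative x\<bar> powr p * norm x powr (- s))"
    using integrable_combination_powr[OF p, of 0] by simp
  show "integrable lborel (\<lambda>x. norm (grad f x) powr p * norm x powr (p - s))"
    using p integrable_abs_powr_mult_norm_powr[of "\<lambda>x. norm (grad f x)" p "p - s"]
    by (simp add: continuous_on_norm continuous_on_grad grad_eq_0_outside_tsupport)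
  fix x :: "real^'n"
  show "\<bar>radial_derivative x\<bar> powr p * norm x powr (- s) \<le> norm (grad f x) powr p * norm x powr (p - s)"
  proof (cases "x = 0")
    case False
    have "\<bar>radial_derivative x\<bar> powr p \<le> (norm x * norm (grad f x)) powr p"
      unfolding radial_derivative_def using p by (intro powr_mono2 Cauchy_Schwarz_ineq2) auto
    also have "\<dots> * norm x powr (- s) = norm (grad f x) powr p * norm x powr (p - s)"
      using False by (simp add: powr_mult powr_diff powr_minus divide_inverse)
    finally show ?thesis
      by (simp add: mult_right_mono)
  qed simp
qed

text \<open>The tangent-line inequality at \<open>b = -\<gamma> f\<close>, integrated against \<open>|x|^(-s)\<close>: the first-order
  term is a divergence, which the Euler identity turns into \<open>-p \<gamma>^p\<close> times the Hardy integral
  when \<open>n - s = p \<gamma>\<close>.\<close>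

lemma radial_hardy_with_remainder:
  assumes p: "2 \<le> p" and \<gamma>: "0 \<le> \<gamma>" and s: "real CARD('n) - s = p * \<gamma>"
  shows "\<gamma> powr p * (\<integral>x. \<bar>f x\<bar> powr p * norm x powr (- s) \<partial>lborel)
      + c_const p * (\<integral>x. \<bar>radial_derivative x + \<gamma> * f x\<bar> powr p * norm x powr (- s) \<partial>lborel)
    \<le> (\<integral>x. \<bar>radial_derivative x\<bar> powr p * norm x powr (- s) \<partial>lborel)"
proof -
  define D where "D = radial_derivative"
  define F where "F x = \<bar>f x\<bar> powr p * norm x powr (- s)" for x
  define E where "E x = p * \<bar>f x\<bar> powr (p - 1) * sgn (f x) * D x * norm x powr (- s)" for x
  define G where "G x = \<bar>D x + \<gamma> * f x\<bar> powr p * norm x powr (- s)" for x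
  have \<gamma>_pow: "\<gamma> powr (p - 1) * \<gamma> = \<gamma> powr p"
    using \<gamma> powr_add[of \<gamma> "p - 1" 1] by (cases "\<gamma> = 0") auto
  have pointwise: "\<gamma> powr p * F x - \<gamma> powr (p - 1) * E x - p * \<gamma> powr p * F x + c_const p * G x
      \<le> \<bar>D x\<bar> powr p * norm x powr (- s)" for x
  proof -
    have "(\<gamma> powr p * \<bar>f x\<bar> powr p - \<gamma> powr (p - 1) * (p * \<bar>f x\<bar> powr (p - 1) * sgn (f x) * D x)
        - p * \<gamma> powr p * \<bar>f x\<bar> powr p + c_const p * \<bar>D x + \<gamma> * f x\<bar> powr p) * norm x powr (- s)
      \<le> \<bar>D x\<bar> powr p * norm x powr (- s)"
      by (rule mult_right_mono[OF abs_powr_tangent_ineq_at_neg_multiple[OF p \<gamma>]]) simp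
    then show ?thesis
      by (simp add: F_def E_def G_def algebra_simps)
  qed
  have F_int: "integrable lborel F"
    unfolding F_def using p by (intro integrable_abs_powr_mult_norm_powr continuous_on_f eq_0_outside_tsupport) auto
  have E_int: "integrable lborel E" and E_integral: "(\<integral>x. E x \<partial>lborel) = - (p * \<gamma>) * (\<integral>x. F x \<partial>lborel)"
    unfolding E_def[abs_def] F_def[abs_def] D_def radial_derivative_def
    using euler_identity[of p "- s"] p s by simp_all
  have G_int: "integrable lborel G"
    unfolding G_def D_def using p by (intro integrable_combination_powr) auto
  have D_int: "integrable lborel (\<lambda>x. \<bar>D x\<bar> powr p * norm x powr (- s))"
    using integrable_combination_powr[of p 0 "- s"] p by (simp add: D_def)
  have "(\<integral>x. \<gamma> powr p * F x - \<gamma> powr (p - 1) * E x - p * \<gamma> powr p * F x + c_const p * G x \<partial>lborel)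
      \<le> (\<integral>x. \<bar>D x\<bar> powr p * norm x powr (- s) \<partial>lborel)"
    using F_int E_int G_int D_int pointwise by (intro integral_mono) auto
  moreover have "(\<integral>x. \<gamma> powr p * F x - \<gamma> powr (p - 1) * E x - p * \<gamma> powr p * F x + c_const p * G x \<partial>lborel)
      = \<gamma> powr p * (\<integral>x. F x \<partial>lborel) + c_const p * (\<integral>x. G x \<partial>lborel)"
    using F_int E_int G_int by (simp add: E_integral algebra_simps \<gamma>_pow[symmetric])
  ultimately show ?thesis
    by (simp add: F_def G_def D_def)
qed

lemma integral_combination_eq:
  assumes p: "1 < p"
  shows "integrable lborel (\<lambda>x. (radial_derivative x + \<gamma> * f x) * (\<bar>f x\<bar> powr (p - 1) * sgn (f x)) * norm x powr \<delta>)"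
    and "(\<integral>x. (radial_derivative x + \<gamma> * f x) * (\<bar>f x\<bar> powr (p - 1) * sgn (f x)) * norm x powr \<delta> \<partial>lborel)
      = (\<gamma> - (real CARD('n) + \<delta>) / p) * (\<integral>x. \<bar>f x\<bar> powr p * norm x powr \<delta> \<partial>lborel)"
proof -
  have "(\<lambda>x. (radial_derivative x + \<gamma> * f x) * (\<bar>f x\<bar> powr (p - 1) * sgn (f x)) * norm x powr \<delta>)
      = (\<lambda>x. (1 / p) * (p * \<bar>f x\<bar> powr (p - 1) * sgn (f x) * inner x (grad f x) * norm x powr \<delta>)
             + \<gamma> * (\<bar>f x\<bar> powr p * norm x powr \<delta>))"
    using p by (auto simp: radial_derivative_def abs_powr_minus_one_sgn_mult[of "f _" p, symmetric] algebra_simps)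
  moreover have "integrable lborel (\<lambda>x. \<bar>f x\<bar> powr p * norm x powr \<delta>)"
    using p by (intro integrable_abs_powr_mult_norm_powr continuous_on_f eq_0_outside_tsupport) auto
  ultimately show "integrable lborel (\<lambda>x. (radial_derivative x + \<gamma> * f x) * (\<bar>f x\<bar> powr (p - 1) * sgn (f x)) * norm x powr \<delta>)"
    and "(\<integral>x. (radial_derivative x + \<gamma> * f x) * (\<bar>f x\<bar> powr (p - 1) * sgn (f x)) * norm x powr \<delta> \<partial>lborel)
      = (\<gamma> - (real CARD('n) + \<delta>) / p) * (\<integral>x. \<bar>f x\<bar> powr p * norm x powr \<delta> \<partial>lborel)"
    using euler_identity[OF p, of \<delta>] p by (simp_all add: field_simps)
qed

lemma Holder_combination:
  assumes p: "1 < p"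
  shows "\<bar>\<integral>x. (radial_derivative x + \<gamma> * f x) * (\<bar>f x\<bar> powr (p - 1) * sgn (f x)) * norm x powr \<delta> \<partial>lborel\<bar> powr p
    \<le> (\<integral>x. \<bar>radial_derivative x + \<gamma> * f x\<bar> powr p * norm x powr (- s) \<partial>lborel)
      * (\<integral>x. \<bar>f x\<bar> powr p * norm x powr ((\<delta> + s / p) * (p / (p - 1))) \<partial>lborel) powr (p - 1)"
proof -
  define V where "V x = (radial_derivative x + \<gamma> * f x) * (\<bar>f x\<bar> powr (p - 1) * sgn (f x)) * norm x powr \<delta>" for x
  define u where "u x = \<bar>radial_derivative x + \<gamma> * f x\<bar> * norm x powr (- s / p)" for x
  define v where "v x = \<bar>f x\<bar> powr (p - 1) * norm x powr (\<delta> + s / p)" for x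
  have uv: "\<bar>V x\<bar> = u x * v x" for x
  proof (cases "f x = 0")
    case False
    then have "x \<noteq> 0"
      using eq_0_outside_tsupport zero_notin_tsupport by blast
    have "\<bar>V x\<bar> = \<bar>radial_derivative x + \<gamma> * f x\<bar> * \<bar>f x\<bar> powr (p - 1) * \<bar>sgn (f x)\<bar> * norm x powr \<delta>"
      by (simp add: V_def abs_mult)
    also have "\<dots> = \<bar>radial_derivative x + \<gamma> * f x\<bar> * \<bar>f x\<bar> powr (p - 1)
        * (norm x powr (- s / p) * norm x powr (\<delta> + s / p))"
      using False \<open>x \<noteq> 0\<close> by (simp add: abs_sgn_eq powr_add[symmetric])
    also have "\<dots> = u x * v x"
      by (simp add: u_def v_def mult_ac)
    finally show ?thesis .
  qed (simp add: V_def u_def v_def)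
  have u_pow: "u x powr p = \<bar>radial_derivative x + \<gamma> * f x\<bar> powr p * norm x powr (- s)" for x
    using p by (simp add: u_def powr_mult powr_powr)
  have v_pow: "v x powr (p / (p - 1)) = \<bar>f x\<bar> powr p * norm x powr ((\<delta> + s / p) * (p / (p - 1)))" for x
    using p by (simp add: v_def powr_mult powr_powr)
  have "\<bar>\<integral>x. V x \<partial>lborel\<bar> \<le> (\<integral>x. u x * v x \<partial>lborel)"
    using integral_combination_eq(1)[OF p] by (simp add: V_def[abs_def] uv[symmetric])
  then have "\<bar>\<integral>x. V x \<partial>lborel\<bar> powr p \<le> (\<integral>x. u x * v x \<partial>lborel) powr p"
    using p by (intro powr_mono2) auto
  also have "\<dots> \<le> (\<integral>x. u x powr p \<partial>lborel) * (\<integral>x. v x powr (p / (p - 1)) \<partial>lborel) powr (p - 1)"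
  proof (rule Holder_inequality_integral[OF p])
    show "integrable lborel (\<lambda>x. u x * v x)"
      using integral_combination_eq(1)[OF p] by (simp add: V_def[abs_def] uv[symmetric])
    show "integrable lborel (\<lambda>x. u x powr p)"
      unfolding u_pow using p by (intro integrable_combination_powr) auto
    show "integrable lborel (\<lambda>x. v x powr (p / (p - 1)))"
      unfolding v_pow using p by (intro integrable_abs_powr_mult_norm_powr continuous_on_f eq_0_outside_tsupport) auto
  qed (simp_all add: u_def v_def)
  finally show ?thesis
    unfolding u_pow v_pow V_def .
qed

theorem weighted_hardy_remainder:
  assumes p: "2 \<le> p" and \<gamma>: "0 \<le> \<gamma>" and s: "real CARD('n) - s = p * \<gamma>"
  shows "c_const p * \<bar>\<gamma> - (real CARD('n) + \<delta>) / p\<bar> powr p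
        * (\<integral>x. \<bar>f x\<bar> powr p * norm x powr \<delta> \<partial>lborel) powr p
        / (\<integral>x. \<bar>f x\<bar> powr p * norm x powr ((\<delta> + s / p) * (p / (p - 1))) \<partial>lborel) powr (p - 1)
    \<le> (\<integral>x. norm (grad f x) powr p * norm x powr (p - s) \<partial>lborel)
      - \<gamma> powr p * (\<integral>x. \<bar>f x\<bar> powr p * norm x powr (- s) \<partial>lborel)"
proof -
  define I where "I = (\<integral>x. \<bar>f x\<bar> powr p * norm x powr \<delta> \<partial>lborel)"
  define I' where "I' = (\<integral>x. \<bar>f x\<bar> powr p * norm x powr ((\<delta> + s / p) * (p / (p - 1))) \<partial>lborel)"
  define J where "J = (\<integral>x. \<bar>radial_derivative x + \<gamma> * f x\<bar> powr p * norm x powr (- s) \<partial>lborel)"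
  have "\<bar>(\<gamma> - (real CARD('n) + \<delta>) / p) * I\<bar> powr p \<le> J * I' powr (p - 1)"
    using Holder_combination[of p \<gamma> \<delta> s] integral_combination_eq(2)[of p \<gamma> \<delta>] p
    by (simp add: I_def I'_def J_def)
  then have "\<bar>\<gamma> - (real CARD('n) + \<delta>) / p\<bar> powr p * I powr p / I' powr (p - 1) \<le> J"
    by (cases "I' = 0")
      (auto simp: J_def I_def abs_mult powr_mult divide_le_eq integral_nonneg_AE)
  then have "c_const p * \<bar>\<gamma> - (real CARD('n) + \<delta>) / p\<bar> powr p * I powr p / I' powr (p - 1)
      \<le> c_const p * J"
    using c_const_nonneg[OF p] by (simp add: mult_left_mono mult.assoc times_divide_eq_right[symmetric]
      del: times_divide_eq_right)
  also have "\<dots> \<le> (\<integral>x. norm (grad f x) powr p * norm x powr (p - s) \<partial>lborel)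
      - \<gamma> powr p * (\<integral>x. \<bar>f x\<bar> powr p * norm x powr (- s) \<partial>lborel)"
    using radial_hardy_with_remainder[OF p \<gamma> s] integral_radial_derivative_le_grad[of p s] p
    by (simp add: J_def)
  finally show ?thesis
    by (simp add: I_def I'_def)
qed

end

theorem mainTheorem4:
  fixes f :: "real^'n \<Rightarrow> real" and p \<alpha> b :: real
  assumes "CARD('n) \<ge> 3"
    and "2 \<le> p" and "p < real CARD('n)"
    and "\<alpha> < (real CARD('n) - p) / p"
    and "C0_inf_punctured f"
  shows "(let n = real CARD('n);
              \<delta>\<^sub>1 = n - p - \<alpha> * p - (n + p * b) / p;
              \<delta>\<^sub>2 = n - p - \<alpha> * p - b * p / (p - 1);
              C = c_const p * \<bar>(n * (p - 1) - p * b) / p^2\<bar> powr p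
          in (\<integral>x. norm (grad f x) powr p / norm x powr (\<alpha> * p) \<partial>lborel)
             - ((n - p - \<alpha> * p) / p) powr p
               * (\<integral>x. \<bar>f x\<bar> powr p / norm x powr ((\<alpha> + 1) * p) \<partial>lborel)
             \<ge> C * (\<integral>x. \<bar>f x\<bar> powr p * norm x powr \<delta>\<^sub>1 \<partial>lborel) powr p
                 / (\<integral>x. \<bar>f x\<bar> powr p * norm x powr \<delta>\<^sub>2 \<partial>lborel) powr (p - 1))"
proof -
  interpret punctured_test_function f
    by (rule punctured_test_function.intro) (fact assms(5))
  define n where "n = real CARD('n)"
  define \<gamma> where "\<gamma> = (n - p - \<alpha> * p) / p"
  define s where "s = (\<alpha> + 1) * p"
  define \<delta> where "\<delta> = n - p - \<alpha> * p - (n + p * b) / p"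
  note p = assms(2)
  \<comment> \<open>only \<open>\<gamma> \<ge> 0\<close> is needed\<close>
  have "0 \<le> \<gamma>"
    using assms(4) p by (simp add: \<gamma>_def n_def field_simps)
  moreover have "n - s = p * \<gamma>"
    using p by (simp add: \<gamma>_def s_def field_simps)
  ultimately have estimate: "c_const p * \<bar>\<gamma> - (n + \<delta>) / p\<bar> powr p
        * (\<integral>x. \<bar>f x\<bar> powr p * norm x powr \<delta> \<partial>lborel) powr p
        / (\<integral>x. \<bar>f x\<bar> powr p * norm x powr ((\<delta> + s / p) * (p / (p - 1))) \<partial>lborel) powr (p - 1)
    \<le> (\<integral>x. norm (grad f x) powr p * norm x powr (p - s) \<partial>lborel)
      - \<gamma> powr p * (\<integral>x. \<bar>f x\<bar> powr p * norm x powr (- s) \<partial>lborel)"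
    using weighted_hardy_remainder[OF p, of \<gamma> s \<delta>] by (simp add: n_def)
  have "\<gamma> - (n + \<delta>) / p = - ((n * (p - 1) - p * b) / p^2)"
    and "(\<delta> + s / p) * (p / (p - 1)) = n - p - \<alpha> * p - b * p / (p - 1)"
    and "p - s = - (\<alpha> * p)"
    using p by (simp_all add: \<gamma>_def \<delta>_def s_def field_simps power2_eq_square)
  with estimate show ?thesis
    unfolding Let_def by (simp add: n_def \<gamma>_def \<delta>_def s_def powr_minus_divide)
qed

end
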